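(* Let $\alpha=2\sqrt7-4$ and fix $\varepsilon>0$. For every balanced tetrahedral erasure channel $W$ with $Q(W)\le\alpha-\varepsilon$, there exists an integer $m>0$ such that for all $n\ge m$, every $n$th-generation descendant $W'$ of $W$ satisfies $Q(W')\ge Q(W)(1+\varepsilon/8)$ (i.e. $Q(W_n)\ge Q(W)(1+\varepsilon/8)$ for all $n\ge m$).
   Context: $\mathrm{TEC}(p,q,r,s,t)$ denotes a tetrahedral erasure channel with parameters $p,q,r,s,t\ge0$ summing to $1$. Its entropy is $H=\frac{q+r+s}{2}+t$, its edge mass is $E=q+r+s$, and its Quetelet index is $Q=E/(H(1-H))$ (defined when $0<H<1$). It is balanced if $q=r=s$. For $W=\mathrm{TEC}(p,q,r,s,t)$, the serial child is $W^{s}=\mathrm{TEC}(p^2,\ ps+sq+qp,\ pq+qr+rp,\ pr+rs+sp,\ 1-\text{(sum of the other four)})$ and the parallel child is $W^{p}=\mathrm{TEC}(1-\text{(sum of the other four)},\ ts+sq+qt,\ tq+qr+rt,\ tr+rs+st,\ t^2)$. The $0$th-generation descendant of $W$ is $W$; the $n$th-generation descendants are the children of the $(n-1)$th-generation descendants; $W_n$ denotes a random $n$th-generation descendant (each step choosing a child with probability $1/2$). *)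

theory Defs
  imports Complex_Main
begin

datatype tec = TEC (tp: real) (tq: real) (tr: real) (ts: real) (tt: real)

definition is_TEC :: "tec \<Rightarrow> bool" where
  "is_TEC W \<longleftrightarrow> tp W \<ge> 0 \<and> tq W \<ge> 0 \<and> tr W \<ge> 0 \<and> ts W \<ge> 0 \<and> tt W \<ge> 0
     \<and> tp W + tq W + tr W + ts W + tt W = 1"

definition entropy :: "tec \<Rightarrow> real" where
  "entropy W = (tq W + tr W + ts W) / 2 + tt W"

definition edge_mass :: "tec \<Rightarrow> real" where
  "edge_mass W = tq W + tr W + ts W"

text \<open>Quetelet index; only meaningful when 0 < entropy W < 1.\<close>
definition quetelet :: "tec \<Rightarrow> real" where
  "quetelet W = edge_mass W / (entropy W * (1 - entropy W))"

definition balanced :: "tec \<Rightarrow> bool" where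
  "balanced W \<longleftrightarrow> tq W = tr W \<and> tr W = ts W"

fun serial_child :: "tec \<Rightarrow> tec" where
  "serial_child (TEC p q r s t) =
     (let a = p^2; b = p*s + s*q + q*p; c = p*q + q*r + r*p; d = p*r + r*s + s*p
      in TEC a b c d (1 - (a + b + c + d)))"

fun parallel_child :: "tec \<Rightarrow> tec" where
  "parallel_child (TEC p q r s t) =
     (let b = t*s + s*q + q*t; c = t*q + q*r + r*t; d = t*r + r*s + s*t; e = t^2
      in TEC (1 - (b + c + d + e)) b c d e)"

text \<open>Descendant reached by a sequence of choices (True = serial, False = parallel);
  the n-th generation descendants are exactly the descendant bs W with length bs = n.\<close>
fun descendant :: "bool list \<Rightarrow> tec \<Rightarrow> tec" where
  "descendant [] W = W"
| "descendant (b # bs) W = (if b then serial_child else parallel_child) (descendant bs W)"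

end

theory Submission
  imports Defs
begin

text \<open>
  For a balanced channel with entropy H, g = 1 - H and Quetelet index Q, the parallel child has
  Q' = Q * parallel_factor Q g, and the serial child is the parallel child of the channel with
  p and t exchanged (which maps H to 1 - H and keeps Q). While Q \<le> \<alpha> = 2 sqrt 7 - 4, a step multiplies Q by at least
  1 + \<rho> m(Q) / 3, where m(Q) = 1 - 2Q/3 - Q^2/12 \<ge> 0 and the weight \<rho> is 1 - H for the
  parallel and H for the serial child; and a threshold T \<le> \<alpha> that Q has reached is never
  left again.

  Take T = Q(W) (1 + \<epsilon>/8) < \<alpha>. A step of weight \<rho> \<ge> 1/4 multiplies Q by the fixed
  factor 1 + m(T)/12 > 1, so boundedly many of them bring Q above T. A step of weight
  \<rho> < 1/4 multiplies the entropy margin min(H, 1 - H) by 3/2 (up to 1/4), and since the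
  margin bounds \<rho> from below, only boundedly many such steps can follow each other; a step
  of weight \<rho> \<ge> 1/4 at worst squares the margin (up to the factor 2/3). Hence the number
  of steps before Q exceeds T is bounded along every path.
\<close>

definition growth_margin :: "real \<Rightarrow> real" where
  "growth_margin Q = 1 - 2*Q/3 - Q^2/12"

definition parallel_factor :: "real \<Rightarrow> real \<Rightarrow> real" where
  "parallel_factor Q g = 2*(1 - Q*g/3) / ((1 - Q^2*g^2/12) * (2 - g + Q^2*g*(1-g)^2/12))"

lemma growth_margin_antimono:
  fixes Q T :: real
  assumes "0 \<le> Q" "Q \<le> T"
  shows "growth_margin T \<le> growth_margin Q"
proof -
  have "Q^2 \<le> T^2"
    using assms by (intro power_mono) auto
  thus ?thesis
    using assms unfolding growth_margin_def by linarith
qed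

lemma growth_margin_pos:
  assumes "0 \<le> Q" "Q < 2 * sqrt 7 - 4"
  shows "0 < growth_margin Q"
proof -
  define \<alpha> where "\<alpha> = 2 * sqrt 7 - 4"
  have "sqrt 7 * sqrt 7 = 7"
    by simp
  hence "\<alpha>^2 + 8 * \<alpha> = 12"
    unfolding \<alpha>_def power2_eq_square by (simp add: algebra_simps)
  moreover have "Q^2 < \<alpha>^2"
    using assms unfolding \<alpha>_def by (intro power_strict_mono) auto
  ultimately show ?thesis
    using assms(2) unfolding growth_margin_def \<alpha>_def[symmetric] by linarith
qed

lemma parallel_factor_denominators_pos:
  fixes Q g :: real
  assumes "0 \<le> Q" "0 \<le> g" "g \<le> 1" "Q*g \<le> 2"
  shows "0 < 1 - Q^2*g^2/12" and "0 < 2 - g + Q^2*g*(1-g)^2/12"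
proof -
  have "(Q*g)^2 \<le> 2^2"
    using assms by (intro power_mono) auto
  thus "0 < 1 - Q^2*g^2/12"
    by (simp add: power_mult_distrib)
  show "0 < 2 - g + Q^2*g*(1-g)^2/12"
    using assms by (simp add: add_pos_nonneg)
qed

lemma one_plus_margin_le_parallel_factor:
  assumes "0 \<le> Q" "0 \<le> growth_margin Q" "0 \<le> g" "g \<le> 1" "Q*g \<le> 2" "Q*(1-g) \<le> 2"
  shows "1 + g * growth_margin Q / 3 \<le> parallel_factor Q g"
proof -
  define m where "m = growth_margin Q"
  define D1 where "D1 = 1 - Q^2*g^2/12"
  define D2 where "D2 = 2 - g + Q^2*g*(1-g)^2/12"
  have D1_pos: "0 < D1" and D2_pos: "0 < D2"
    unfolding D1_def D2_def using parallel_factor_denominators_pos assms by simp_all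
  have "Q^2*g*(1-g)^2 = (Q*g) * (Q*(1-g)) * (1-g)"
    by (simp add: power2_eq_square)
  also have "\<dots> \<le> 2*2*1"
    using assms by (intro mult_mono) (auto simp: mult_nonneg_nonneg)
  finally have "D2 \<le> 3"
    unfolding D2_def using assms by linarith
  moreover have "D1 \<le> 1"
    unfolding D1_def by simp
  ultimately have "D1 * D2 \<le> 1 * 3"
    using D2_pos by (intro mult_mono) auto
  hence "g * m * (D1 * D2 / 3) \<le> g * m"
    using assms m_def by (intro mult_left_le) auto
  moreover have "g * m \<le> g * (m + Q^2*2*g*(2-g)/12 + Q^4*g^2*(1-g)^2/144)"
    using assms by (intro mult_left_mono) auto
  moreover have "2*(1 - Q*g/3) - D1*D2 = g * (m + Q^2*2*g*(2-g)/12 + Q^4*g^2*(1-g)^2/144)"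
    unfolding D1_def D2_def m_def growth_margin_def
    by (simp add: algebra_simps power2_eq_square power4_eq_xxxx divide_simps)
  ultimately have "(1 + g*m/3) * (D1*D2) \<le> 2*(1 - Q*g/3)"
    by (simp add: algebra_simps)
  thus ?thesis
    unfolding parallel_factor_def m_def[symmetric] D1_def[symmetric] D2_def[symmetric]
    using D1_pos D2_pos by (simp add: pos_le_divide_eq)
qed

lemma threshold_quadratic_at_two_nonneg:
  fixes T g :: real
  assumes "0 \<le> T" "T \<le> 13/10" "0 \<le> g" "g \<le> 1"
  shows "0 \<le> 4/3 - T/3 - 2*T*g/3 + g^2 * (T*(2*T/3 + T^2/12 - 2/3))"
proof -
  define c where "c = T*(2*T/3 + T^2/12 - 2/3)"
  have Tg: "T*g \<le> T"
    using assms by (simp add: mult_left_le)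
  show ?thesis
    unfolding c_def[symmetric]
  proof (cases "0 \<le> c")
    case True
    hence "0 \<le> g^2*c"
      by simp
    thus "0 \<le> 4/3 - T/3 - 2*T*g/3 + g^2*c"
      using Tg assms by linarith
  next
    case False
    have "1 * c \<le> g^2 * c"
      using False assms by (intro mult_right_mono_neg) (auto simp: power_le_one)
    moreover have "T*(2*T/3 - 2/3) \<le> c"
      unfolding c_def using assms by (simp add: mult_left_mono)
    moreover have "4/3 - T + T*(2*T/3 - 2/3) = 2/3*(T - 5/4)^2 + 7/24"
      by (simp add: algebra_simps power2_eq_square)
    ultimately show "0 \<le> 4/3 - T/3 - 2*T*g/3 + g^2*c"
      using Tg zero_le_power2[of "T - 5/4"] by linarith
  qed
qed

lemma threshold_quadratic_nonneg:
  fixes T g A :: real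
  assumes "0 \<le> T" "T \<le> 13/10" "0 < g" "g \<le> 1" "g*T \<le> A" "A \<le> 2"
  shows "0 \<le> (A - g*T) * (2 - 2*A/3 - T*g*(2/3 + T/12) - T*A/12) + T*A^2*g*(2-g)/6"
proof -
  define F where "F A = (A - g*T) * (2 - 2*A/3 - T*g*(2/3 + T/12) - T*A/12) + T*A^2*g*(2-g)/6"
    for A
  define k where "k = 2/3 + T/12 - T*g*(2-g)/6"
  have gT_less: "g*T < 2"
    using assms mult_right_le_one_le[of T g] by (simp add: mult.commute)
  have "1 - g*(2-g) = (1-g)^2"
    by (simp add: algebra_simps power2_eq_square)
  hence "g*(2-g) \<le> 1"
    using zero_le_power2[of "1-g"] by linarith
  hence k_nonneg: "0 \<le> k"
    unfolding k_def using assms mult_left_mono[of "g*(2-g)" 1 T] by (simp add: mult.assoc)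
  have "F (g*T) = T^3*g^3*(2-g)/6"
    unfolding F_def by (simp add: algebra_simps power2_eq_square power3_eq_cube)
  moreover have "0 \<le> T^3*g^3*(2-g)"
    using assms by simp
  ultimately have F_gT: "0 \<le> F (g*T)"
    by linarith
  have "F 2 = 4/3 - T/3 - 2*T*g/3 + g^2 * (T*(2*T/3 + T^2/12 - 2/3))"
    unfolding F_def by (simp add: field_simps) (simp add: algebra_simps power2_eq_square)
  hence F_2: "0 \<le> F 2"
    using threshold_quadratic_at_two_nonneg assms by simp
  \<comment> \<open>F is a quadratic with leading coefficient -k \<le> 0; this is Lagrange interpolation
    at the endpoints g*T and 2, so F is nonnegative between them.\<close>
  have "(2 - g*T) * F A = k*(2 - g*T)*(A - g*T)*(2 - A) + F (g*T)*(2 - A) + F 2*(A - g*T)"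
    unfolding F_def k_def by (simp add: field_simps) (simp add: algebra_simps power2_eq_square)
  moreover have "0 \<le> k*(2 - g*T)*(A - g*T)*(2 - A)"
    using k_nonneg gT_less assms by (intro mult_nonneg_nonneg) auto
  ultimately have "0 \<le> (2 - g*T) * F A"
    using F_gT F_2 assms by (simp add: add_nonneg_nonneg)
  thus ?thesis
    using gT_less unfolding F_def by (simp add: zero_le_mult_iff)
qed

lemma threshold_le_parallel_factor:
  fixes T Q g :: real
  assumes "0 \<le> T" "0 \<le> growth_margin T" "T \<le> Q" "0 < g" "g \<le> 1" "Q*g \<le> 2"
  shows "T \<le> Q * parallel_factor Q g"
proof -
  have "T \<le> 13/10"
  proof (rule ccontr)
    assume "\<not> T \<le> 13/10"
    hence "13/10 * (13/10) < T * T"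
      by (intro mult_strict_mono) auto
    thus False
      using assms(2) \<open>\<not> T \<le> 13/10\<close> unfolding growth_margin_def power2_eq_square by linarith
  qed
  moreover have "g*T \<le> Q*g"
    using assms mult_left_mono[of T Q g] by (simp add: mult.commute)
  ultimately have F_nonneg:
    "0 \<le> (Q*g - g*T) * (2 - 2*(Q*g)/3 - T*g*(2/3 + T/12) - T*(Q*g)/12) + T*(Q*g)^2*g*(2-g)/6"
    using threshold_quadratic_nonneg assms by simp
  define D1 where "D1 = 1 - Q^2*g^2/12"
  define D2 where "D2 = 2 - g + Q^2*g*(1-g)^2/12"
  have "g * (Q*(2*(1 - Q*g/3)) - T*(D1*D2))
      = (Q*g - g*T) * (2 - 2*(Q*g)/3 - T*g*(2/3 + T/12) - T*(Q*g)/12) + T*(Q*g)^2*g*(2-g)/6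
        + T*g^2*growth_margin T + T*(Q*g)^4*(1-g)^2/144"
    unfolding D1_def D2_def growth_margin_def
    by (simp add: field_simps) (simp add: algebra_simps power2_eq_square power4_eq_xxxx)
  moreover have "0 \<le> T*g^2*growth_margin T + T*(Q*g)^4*(1-g)^2/144"
    using assms by simp
  ultimately have "0 \<le> g * (Q*(2*(1 - Q*g/3)) - T*(D1*D2))"
    using F_nonneg by linarith
  hence "T*(D1*D2) \<le> Q*(2*(1 - Q*g/3))"
    using assms(4) by (simp add: zero_le_mult_iff)
  moreover have "0 < D1" "0 < D2"
    unfolding D1_def D2_def using parallel_factor_denominators_pos assms by simp_all
  ultimately show ?thesis
    unfolding parallel_factor_def D1_def[symmetric] D2_def[symmetric]
    by (simp add: pos_le_divide_eq)
qed

definition balanced_channel :: "tec \<Rightarrow> bool" where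
  "balanced_channel V \<longleftrightarrow> is_TEC V \<and> balanced V \<and> 0 < entropy V \<and> entropy V < 1"

definition entropy_margin :: "tec \<Rightarrow> real" where
  "entropy_margin V = min (entropy V) (1 - entropy V)"

lemma edge_mass_bounds:
  assumes "is_TEC V"
  shows "0 \<le> edge_mass V" "edge_mass V \<le> 2 * entropy V" "edge_mass V \<le> 2 * (1 - entropy V)"
  using assms unfolding is_TEC_def edge_mass_def entropy_def by (simp_all add: field_simps)

lemma quetelet_nonneg: "balanced_channel V \<Longrightarrow> 0 \<le> quetelet V"
  unfolding balanced_channel_def quetelet_def using edge_mass_bounds(1) by simp

lemma quetelet_le_two:
  assumes "balanced_channel V"
  shows "quetelet V * (1 - entropy V) \<le> 2" "quetelet V * entropy V \<le> 2"
proof -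
  have h: "0 < entropy V" "0 < 1 - entropy V" and E: "is_TEC V"
    using assms unfolding balanced_channel_def by auto
  have "quetelet V * (1 - entropy V) = edge_mass V / entropy V"
    "quetelet V * entropy V = edge_mass V / (1 - entropy V)"
    unfolding quetelet_def using h by (simp_all add: field_simps)
  thus "quetelet V * (1 - entropy V) \<le> 2" "quetelet V * entropy V \<le> 2"
    using edge_mass_bounds[OF E] h by (simp_all add: divide_le_eq mult.commute)
qed

lemma parallel_child_of_balanced:
  assumes "is_TEC V" "balanced V"
  shows "is_TEC (parallel_child V)" "balanced (parallel_child V)"
    and "entropy (parallel_child V) = entropy V^2 - edge_mass V^2 / 12"
    and "edge_mass (parallel_child V) = 2 * entropy V * edge_mass V - 2 * edge_mass V^2 / 3"
proof -
  obtain p x t where V: "V = TEC p x x x t"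
    using assms(2) unfolding balanced_def by (cases V) auto
  have nonneg: "0 \<le> p" "0 \<le> x" "0 \<le> t" and sum: "p + 3*x + t = 1"
    using assms(1) unfolding V is_TEC_def by auto
  have "(p + 3*x + t)^2 - (3*(t*x + x*x + x*t) + t^2) = p^2 + 6*x^2 + 6*p*x + 2*p*t"
    by (simp add: power2_eq_square algebra_simps)
  moreover have "0 \<le> p^2 + 6*x^2 + 6*p*x + 2*p*t"
    using nonneg by simp
  ultimately have "3*(t*x + x*x + x*t) + t^2 \<le> 1"
    using sum by simp
  thus "is_TEC (parallel_child V)"
    unfolding V is_TEC_def using nonneg by (simp add: Let_def algebra_simps)
  show "balanced (parallel_child V)"
    unfolding V balanced_def by (simp add: Let_def)
  show "entropy (parallel_child V) = entropy V^2 - edge_mass V^2 / 12"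
    unfolding V entropy_def edge_mass_def by (simp add: Let_def field_simps power2_eq_square)
  show "edge_mass (parallel_child V) = 2 * entropy V * edge_mass V - 2 * edge_mass V^2 / 3"
    unfolding V entropy_def edge_mass_def by (simp add: Let_def field_simps power2_eq_square)
qed

lemma entropy_parallel_child_bounds:
  assumes "is_TEC V" "balanced V"
  shows "2 * entropy V^2 / 3 \<le> entropy (parallel_child V)"
    and "(1 - entropy V) * (1 + entropy V) \<le> 1 - entropy (parallel_child V)"
proof -
  have "edge_mass V^2 \<le> (2 * entropy V)^2"
    using edge_mass_bounds[OF assms(1)] by (intro power_mono) auto
  thus "2 * entropy V^2 / 3 \<le> entropy (parallel_child V)"
    unfolding parallel_child_of_balanced[OF assms] by (simp add: power_mult_distrib)
  show "(1 - entropy V) * (1 + entropy V) \<le> 1 - entropy (parallel_child V)"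
    unfolding parallel_child_of_balanced[OF assms] by (simp add: algebra_simps power2_eq_square)
qed

lemma balanced_channel_parallel_child:
  assumes "balanced_channel V"
  shows "balanced_channel (parallel_child V)"
proof -
  have V: "is_TEC V" "balanced V" "0 < entropy V" "entropy V < 1"
    using assms unfolding balanced_channel_def by auto
  have "0 < 2 * entropy V^2 / 3" "0 < (1 - entropy V) * (1 + entropy V)"
    using V by simp_all
  thus ?thesis
    using entropy_parallel_child_bounds[OF V(1,2)] parallel_child_of_balanced(1,2)[OF V(1,2)]
    unfolding balanced_channel_def by linarith
qed

lemma quetelet_parallel_child:
  assumes "balanced_channel V"
  shows "quetelet (parallel_child V) = quetelet V * parallel_factor (quetelet V) (1 - entropy V)"
proof -
  define h Q where "h = entropy V" and "Q = quetelet V"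
  define g D1 D2 where "g = 1 - h" and "D1 = 1 - Q^2*g^2/12"
    and "D2 = 2 - g + Q^2*g*(1-g)^2/12"
  have V: "is_TEC V" "balanced V" and hg: "h \<noteq> 0" "g \<noteq> 0"
    using assms unfolding balanced_channel_def h_def g_def by auto
  have E: "edge_mass V = Q*h*g"
    unfolding Q_def quetelet_def h_def[symmetric] g_def using hg g_def by simp
  have "entropy (parallel_child V) = h^2 * D1" "1 - entropy (parallel_child V) = g * D2"
    and E': "edge_mass (parallel_child V) = (Q*(2*(1 - Q*g/3))) * (h^2*g)"
    unfolding parallel_child_of_balanced[OF V] E h_def[symmetric] D1_def D2_def g_def
    by (simp_all add: algebra_simps power2_eq_square)
  hence "entropy (parallel_child V) * (1 - entropy (parallel_child V)) = (D1*D2) * (h^2*g)"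
    by simp
  hence "quetelet (parallel_child V) = (Q*(2*(1 - Q*g/3))) * (h^2*g) / ((D1*D2) * (h^2*g))"
    unfolding quetelet_def E' by simp
  also have "\<dots> = Q * parallel_factor Q g"
    unfolding parallel_factor_def D1_def[symmetric] D2_def[symmetric] using hg by simp
  finally show ?thesis
    unfolding Q_def g_def h_def .
qed

lemma quetelet_parallel_child_ge:
  assumes "balanced_channel V" "0 \<le> T" "0 \<le> growth_margin T" "T \<le> quetelet V"
  shows "T \<le> quetelet (parallel_child V)"
  using threshold_le_parallel_factor[OF assms(2-4)] quetelet_le_two[OF assms(1)] assms(1)
  unfolding quetelet_parallel_child[OF assms(1)] balanced_channel_def by simp

lemma quetelet_parallel_child_growth:
  assumes "balanced_channel V" "0 \<le> growth_margin (quetelet V)"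
  shows "quetelet V * (1 + (1 - entropy V) * growth_margin (quetelet V) / 3)
    \<le> quetelet (parallel_child V)"
proof -
  have "1 + (1 - entropy V) * growth_margin (quetelet V) / 3
      \<le> parallel_factor (quetelet V) (1 - entropy V)"
    using one_plus_margin_le_parallel_factor quetelet_nonneg quetelet_le_two assms
    unfolding balanced_channel_def by simp
  thus ?thesis
    unfolding quetelet_parallel_child[OF assms(1)]
    using quetelet_nonneg[OF assms(1)] by (rule mult_left_mono)
qed

lemma entropy_margin_parallel_child:
  assumes "balanced_channel V"
  shows "2/3 * entropy_margin V^2 \<le> entropy_margin (parallel_child V)"
    and "1 - entropy V < 1/4 \<Longrightarrow>
      min (3/2 * entropy_margin V) (1/4) \<le> entropy_margin (parallel_child V)"
proof -
  define h h' \<psi> where "h = entropy V" and "h' = entropy (parallel_child V)"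
    and "\<psi> = entropy_margin V"
  have h: "0 < h" "h < 1" and V: "is_TEC V" "balanced V"
    using assms unfolding balanced_channel_def h_def by auto
  have child_margin: "entropy_margin (parallel_child V) = min h' (1 - h')"
    unfolding entropy_margin_def h'_def ..
  have lower: "2 * h^2 / 3 \<le> h'" and upper: "(1 - h) * (1 + h) \<le> 1 - h'"
    using entropy_parallel_child_bounds[OF V] unfolding h_def h'_def by auto
  have \<psi>: "0 < \<psi>" "\<psi> \<le> h" "\<psi> \<le> 1 - h"
    using h unfolding \<psi>_def entropy_margin_def h_def by auto
  have "\<psi>^2 \<le> h^2"
    using \<psi> by (intro power_mono) auto
  moreover have "\<psi>^2 \<le> \<psi>" "1 - h \<le> (1 - h) * (1 + h)"
    using \<psi> h by (simp_all add: power2_eq_square mult_left_le)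
  ultimately have "2/3 * \<psi>^2 \<le> h'" "2/3 * \<psi>^2 \<le> 1 - h'"
    using lower upper \<psi> by linarith+
  thus "2/3 * entropy_margin V^2 \<le> entropy_margin (parallel_child V)"
    unfolding child_margin \<psi>_def[symmetric] by simp
  assume small: "1 - entropy V < 1/4"
  have "(1 - h) * (3/2) \<le> (1 - h) * (1 + h)"
    using small h unfolding h_def by (intro mult_left_mono) auto
  moreover have "(3/4)^2 \<le> h^2"
    using small unfolding h_def by (intro power_mono) auto
  ultimately have "3/2 * \<psi> \<le> 1 - h'" "1/4 \<le> h'"
    using lower upper \<psi> small unfolding h_def[symmetric] by (simp_all add: power2_eq_square)
  thus "min (3/2 * entropy_margin V) (1/4) \<le> entropy_margin (parallel_child V)"
    unfolding child_margin \<psi>_def[symmetric] by (simp add: min_def)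
qed

definition flip :: "tec \<Rightarrow> tec" where
  "flip V = TEC (tt V) (tq V) (tr V) (ts V) (tp V)"

lemma serial_child_eq_flip: "serial_child V = flip (parallel_child (flip V))"
  by (cases V) (simp add: flip_def Let_def algebra_simps)

lemma flip_invariants:
  shows "is_TEC (flip V) \<longleftrightarrow> is_TEC V" "balanced (flip V) \<longleftrightarrow> balanced V"
    and "edge_mass (flip V) = edge_mass V"
    and "is_TEC V \<Longrightarrow> entropy (flip V) = 1 - entropy V"
    and "is_TEC V \<Longrightarrow> quetelet (flip V) = quetelet V"
proof -
  show "is_TEC (flip V) \<longleftrightarrow> is_TEC V" "balanced (flip V) \<longleftrightarrow> balanced V"
    and E: "edge_mass (flip V) = edge_mass V"
    unfolding is_TEC_def balanced_def edge_mass_def flip_def by auto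
  show H: "entropy (flip V) = 1 - entropy V" if "is_TEC V"
    using that unfolding is_TEC_def entropy_def flip_def by (simp add: field_simps)
  show "quetelet (flip V) = quetelet V" if "is_TEC V"
    unfolding quetelet_def E H[OF that] by (simp add: mult.commute)
qed

definition orient :: "bool \<Rightarrow> tec \<Rightarrow> tec" where
  "orient b V = (if b then flip V else V)"

definition child :: "bool \<Rightarrow> tec \<Rightarrow> tec" where
  "child b = (if b then serial_child else parallel_child)"

lemma child_eq_orient: "child b V = orient b (parallel_child (orient b V))"
  unfolding child_def orient_def using serial_child_eq_flip by simp

lemma orient_invariants:
  assumes "balanced_channel V"
  shows "balanced_channel (orient b V)" "quetelet (orient b V) = quetelet V"
    and "entropy_margin (orient b V) = entropy_margin V"
  using assms flip_invariants[of V]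
  unfolding orient_def balanced_channel_def entropy_margin_def by auto

lemma entropy_margin_pos: "balanced_channel V \<Longrightarrow> 0 < entropy_margin V"
  unfolding balanced_channel_def entropy_margin_def by simp

lemma entropy_margin_le_orient:
  "balanced_channel V \<Longrightarrow> entropy_margin V \<le> 1 - entropy (orient b V)"
  using flip_invariants(4) unfolding balanced_channel_def entropy_margin_def orient_def by auto

lemma child_via_parallel_child:
  assumes "balanced_channel V"
  shows "balanced_channel (child b V)"
    and "quetelet (child b V) = quetelet (parallel_child (orient b V))"
    and "entropy_margin (child b V) = entropy_margin (parallel_child (orient b V))"
  using orient_invariants[OF balanced_channel_parallel_child, OF orient_invariants(1)[OF assms]]
  unfolding child_eq_orient by auto

lemma quetelet_child_ge:
  assumes "balanced_channel V" "0 \<le> T" "0 \<le> growth_margin T" "T \<le> quetelet V"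
  shows "T \<le> quetelet (child b V)"
  using quetelet_parallel_child_ge[OF orient_invariants(1)[OF assms(1)] assms(2,3)] assms(4)
  unfolding child_via_parallel_child(2)[OF assms(1)] orient_invariants(2)[OF assms(1)] by simp

lemma quetelet_child_growth:
  assumes "balanced_channel V" "0 \<le> growth_margin (quetelet V)"
  shows "quetelet V * (1 + (1 - entropy (orient b V)) * growth_margin (quetelet V) / 3)
    \<le> quetelet (child b V)"
  using quetelet_parallel_child_growth[OF orient_invariants(1)[OF assms(1)]] assms(2)
  unfolding child_via_parallel_child(2)[OF assms(1)] orient_invariants(2)[OF assms(1)] by simp

lemma entropy_margin_child:
  assumes "balanced_channel V"
  shows "2/3 * entropy_margin V^2 \<le> entropy_margin (child b V)"
    and "1 - entropy (orient b V) < 1/4 \<Longrightarrow>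
      min (3/2 * entropy_margin V) (1/4) \<le> entropy_margin (child b V)"
  using entropy_margin_parallel_child[OF orient_invariants(1)[OF assms]]
  unfolding child_via_parallel_child(3)[OF assms] orient_invariants(3)[OF assms] by auto

lemma descendant_Cons_child: "descendant (b # bs) V = child b (descendant bs V)"
  by (simp add: child_def)

lemma descendant_snoc: "descendant (bs @ [b]) V = descendant bs (child b V)"
  by (induction bs) (simp_all add: child_def)

lemma balanced_channel_descendant:
  "balanced_channel V \<Longrightarrow> balanced_channel (descendant bs V)"
  by (induction bs)
    (simp_all only: descendant.simps(1) descendant_Cons_child child_via_parallel_child(1))

lemma quetelet_descendant_ge:
  assumes "balanced_channel V" "0 \<le> T" "0 \<le> growth_margin T" "T \<le> quetelet V"
  shows "T \<le> quetelet (descendant bs V)"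
proof (induction bs)
  case Nil
  show ?case using assms(4) by simp
next
  case (Cons b bs)
  show ?case
    unfolding descendant_Cons_child
    using quetelet_child_ge[OF balanced_channel_descendant[OF assms(1)] assms(2,3) Cons.IH] .
qed

definition holds_from_generation :: "nat \<Rightarrow> (tec \<Rightarrow> bool) \<Rightarrow> tec \<Rightarrow> bool" where
  "holds_from_generation n P V \<longleftrightarrow> (\<forall>bs. n \<le> length bs \<longrightarrow> P (descendant bs V))"

lemma holds_from_generation_mono:
  "holds_from_generation m P V \<Longrightarrow> m \<le> n \<Longrightarrow> holds_from_generation n P V"
  unfolding holds_from_generation_def by auto

lemma holds_from_generation_SucI:
  assumes "\<And>b. holds_from_generation n P (child b V)"
  shows "holds_from_generation (Suc n) P V"
  unfolding holds_from_generation_def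
proof (intro allI impI)
  fix bs :: "bool list"
  assume "Suc n \<le> length bs"
  then obtain cs b where "bs = cs @ [b]" "n \<le> length cs"
    by (cases bs rule: rev_cases) auto
  thus "P (descendant bs V)"
    using assms unfolding holds_from_generation_def by (simp add: descendant_snoc)
qed

lemma holds_from_generation_above_threshold:
  assumes "balanced_channel V" "0 \<le> T" "0 \<le> growth_margin T" "T \<le> quetelet V"
  shows "holds_from_generation n (\<lambda>U. T \<le> quetelet U) V"
  using quetelet_descendant_ge[OF assms] unfolding holds_from_generation_def by blast

lemma quetelet_child_below_threshold:
  assumes V: "balanced_channel V" and T: "0 \<le> growth_margin T" "quetelet V \<le> T"
  shows "quetelet V \<le> quetelet (child b V)"
    and "1/4 \<le> 1 - entropy (orient b V) \<Longrightarrow>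
      quetelet V * (1 + growth_margin T / 12) \<le> quetelet (child b V)"
proof -
  define \<rho> m where "\<rho> = 1 - entropy (orient b V)" and "m = growth_margin (quetelet V)"
  have Q: "0 \<le> quetelet V"
    using quetelet_nonneg[OF V] .
  have m: "growth_margin T \<le> m"
    unfolding m_def using growth_margin_antimono[OF Q T(2)] .
  have growth: "quetelet V * (1 + \<rho> * m / 3) \<le> quetelet (child b V)"
    using quetelet_child_growth[OF V] m T(1) unfolding \<rho>_def m_def by simp
  have "0 \<le> \<rho>"
    using entropy_margin_le_orient[OF V, of b] entropy_margin_pos[OF V] unfolding \<rho>_def by simp
  hence "quetelet V * 1 \<le> quetelet V * (1 + \<rho> * m / 3)"
    using Q m T(1) by (intro mult_left_mono) auto
  thus "quetelet V \<le> quetelet (child b V)"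
    using growth by simp
  assume "1/4 \<le> 1 - entropy (orient b V)"
  hence "1/4 * growth_margin T \<le> \<rho> * m"
    using m T(1) unfolding \<rho>_def by (intro mult_mono) auto
  hence "quetelet V * (1 + growth_margin T / 12) \<le> quetelet V * (1 + \<rho> * m / 3)"
    using Q by (intro mult_left_mono) auto
  thus "quetelet V * (1 + growth_margin T / 12) \<le> quetelet (child b V)"
    using growth by linarith
qed

lemma entropy_margin_child_small_weight:
  assumes V: "balanced_channel V" and small: "1 - entropy (orient b V) < 1/4"
    and i: "1/4 \<le> (3/2)^Suc i * entropy_margin V"
  shows "entropy_margin V \<le> entropy_margin (child b V)"
    and "1/4 \<le> (3/2)^i * entropy_margin (child b V)"
proof -
  have grow: "min (3/2 * entropy_margin V) (1/4) \<le> entropy_margin (child b V)"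
    using entropy_margin_child(2)[OF V small] .
  thus "entropy_margin V \<le> entropy_margin (child b V)"
    using entropy_margin_le_orient[OF V, of b] small entropy_margin_pos[OF V] by linarith
  show "1/4 \<le> (3/2)^i * entropy_margin (child b V)"
  proof (cases "1/4 \<le> entropy_margin (child b V)")
    case True
    have "1 * entropy_margin (child b V) \<le> (3/2)^i * entropy_margin (child b V)"
      using True by (intro mult_right_mono) auto
    thus ?thesis
      using True by linarith
  next
    case False
    have "1/4 \<le> (3/2)^i * (3/2 * entropy_margin V)"
      using i by (simp add: mult_ac)
    also have "\<dots> \<le> (3/2)^i * entropy_margin (child b V)"
      using grow False by (intro mult_left_mono) auto
    finally show ?thesis .
  qed
qed

text \<open>One phase: the entropy margin needs at most j steps of weight < 1/4 to reach 1/4, and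
  the first step of weight \<ge> 1/4 starts the next phase with one factor 1 + \<gamma> fewer to go.\<close>

lemma threshold_within_phase:
  fixes T d :: real and k n j :: nat
  defines "\<gamma> \<equiv> growth_margin T / 12"
  assumes T: "0 \<le> T" "0 \<le> growth_margin T" and d: "0 \<le> d"
    and next_phase: "\<And>U. balanced_channel U \<Longrightarrow> 2/3 * d^2 \<le> entropy_margin U \<Longrightarrow>
      T \<le> quetelet U * (1 + \<gamma>)^k \<Longrightarrow> holds_from_generation n (\<lambda>U. T \<le> quetelet U) U"
  shows "balanced_channel V \<Longrightarrow> d \<le> entropy_margin V \<Longrightarrow> 1/4 \<le> (3/2)^j * entropy_margin V \<Longrightarrow>
    T \<le> quetelet V * (1 + \<gamma>)^Suc k \<Longrightarrow> holds_from_generation (n + j + 1) (\<lambda>U. T \<le> quetelet U) V"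
proof (induction j arbitrary: V rule: less_induct)
  case (less j V)
  note V = less.prems
  have \<gamma>: "0 \<le> \<gamma>"
    unfolding \<gamma>_def using T(2) by simp
  show ?case
  proof (cases "T \<le> quetelet V")
    case True
    thus ?thesis
      using holds_from_generation_above_threshold[OF V(1) T] by blast
  next
    case False
    hence below: "quetelet V \<le> T"
      by simp
    have "holds_from_generation (n + j) (\<lambda>U. T \<le> quetelet U) (child b V)" for b
    proof (cases "1/4 \<le> 1 - entropy (orient b V)")
      case True
      hence "quetelet V * (1 + \<gamma>) * (1 + \<gamma>)^k \<le> quetelet (child b V) * (1 + \<gamma>)^k"
        using quetelet_child_below_threshold(2)[OF V(1) T(2) below] \<gamma>
        unfolding \<gamma>_def by (intro mult_right_mono) auto
      hence "T \<le> quetelet (child b V) * (1 + \<gamma>)^k"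
        using V(4) by (simp add: mult.assoc)
      moreover have "d^2 \<le> entropy_margin V^2"
        using V(2) d by (intro power_mono) auto
      hence "2/3 * d^2 \<le> entropy_margin (child b V)"
        using entropy_margin_child(1)[OF V(1), of b] by linarith
      ultimately show ?thesis
        using next_phase child_via_parallel_child(1)[OF V(1)] holds_from_generation_mono
        by fastforce
    next
      case False
      hence small: "1 - entropy (orient b V) < 1/4"
        by simp
      have "j \<noteq> 0"
        using small V(3) entropy_margin_le_orient[OF V(1), of b] by (cases j) auto
      then obtain i where j: "j = Suc i"
        using not0_implies_Suc by blast
      have "quetelet V * (1 + \<gamma>)^Suc k \<le> quetelet (child b V) * (1 + \<gamma>)^Suc k"
        using quetelet_child_below_threshold(1)[OF V(1) T(2) below] \<gamma>
        by (intro mult_right_mono) auto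
      hence "T \<le> quetelet (child b V) * (1 + \<gamma>)^Suc k"
        using V(4) by linarith
      moreover note entropy_margin_child_small_weight[OF V(1) small V(3)[unfolded j]]
      ultimately show ?thesis
        using less.IH[of i "child b V"] child_via_parallel_child(1)[OF V(1)] V(2) unfolding j
        by simp
    qed
    thus ?thesis
      by (simp add: holds_from_generation_SucI)
  qed
qed

lemma threshold_reached:
  fixes T d :: real and k :: nat
  assumes T: "0 \<le> T" "0 \<le> growth_margin T" and d: "0 < d"
  shows "\<exists>n. \<forall>V. balanced_channel V \<longrightarrow> d \<le> entropy_margin V \<longrightarrow>
    T \<le> quetelet V * (1 + growth_margin T / 12)^k \<longrightarrow>
    holds_from_generation n (\<lambda>U. T \<le> quetelet U) V"
  using d
proof (induction k arbitrary: d)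
  case 0
  show ?case
    using holds_from_generation_above_threshold[OF _ T] by auto
next
  case (Suc k)
  obtain n where n: "\<And>U. balanced_channel U \<Longrightarrow> 2/3 * d^2 \<le> entropy_margin U \<Longrightarrow>
      T \<le> quetelet U * (1 + growth_margin T / 12)^k \<Longrightarrow>
      holds_from_generation n (\<lambda>U. T \<le> quetelet U) U"
    using Suc.IH[of "2/3 * d^2"] Suc.prems by auto
  obtain j where "1 / (4*d) < (3/2::real)^j"
    using real_arch_pow[of "3/2::real"] by auto
  hence j: "1/4 \<le> (3/2)^j * d"
    using Suc.prems by (simp add: field_simps)
  have "holds_from_generation (n + j + 1) (\<lambda>U. T \<le> quetelet U) V"
    if "balanced_channel V" "d \<le> entropy_margin V"
      "T \<le> quetelet V * (1 + growth_margin T / 12)^Suc k" for V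
  proof -
    have "(3/2)^j * d \<le> (3/2)^j * entropy_margin V"
      using that(2) by (intro mult_left_mono) auto
    hence "1/4 \<le> (3/2)^j * entropy_margin V"
      using j by linarith
    thus ?thesis
      using threshold_within_phase[OF T _ n that(1,2) _ that(3)] Suc.prems by simp
  qed
  thus ?case
    by blast
qed

theorem mainTheorem7:
  fixes \<epsilon> :: real and W :: tec
  assumes "\<epsilon> > 0"
    and "is_TEC W" and "balanced W"
    and "0 < entropy W" and "entropy W < 1"
    and "quetelet W \<le> (2 * sqrt 7 - 4) - \<epsilon>"
  shows "\<exists>m::nat. m > 0 \<and> (\<forall>n \<ge> m. \<forall>bs. length bs = n \<longrightarrow>
           quetelet (descendant bs W) \<ge> quetelet W * (1 + \<epsilon> / 8))"
proof -
  define T where "T = quetelet W * (1 + \<epsilon> / 8)"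
  define \<gamma> where "\<gamma> = growth_margin T / 12"
  have W: "balanced_channel W"
    using assms unfolding balanced_channel_def by simp
  have "sqrt 7 < 3"
    by (rule real_less_lsqrt) auto
  hence "quetelet W * \<epsilon> < 8 * \<epsilon>"
    using assms(1,6) by simp
  hence "T < 2 * sqrt 7 - 4"
    unfolding T_def using assms(6) by (simp add: algebra_simps)
  moreover have T_nonneg: "0 \<le> T"
    unfolding T_def using quetelet_nonneg[OF W] assms(1) by simp
  ultimately have "0 < \<gamma>"
    unfolding \<gamma>_def using growth_margin_pos by simp
  then obtain J where "1 + \<epsilon>/8 < (1 + \<gamma>)^J"
    using real_arch_pow[of "1 + \<gamma>"] by auto
  hence "T \<le> quetelet W * (1 + \<gamma>)^J"
    unfolding T_def using quetelet_nonneg[OF W] by (simp add: mult_left_mono)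
  then obtain n where "holds_from_generation n (\<lambda>U. T \<le> quetelet U) W"
    using threshold_reached[OF T_nonneg _ entropy_margin_pos[OF W]] W \<open>0 < \<gamma>\<close>
    unfolding \<gamma>_def by fastforce
  thus ?thesis
    unfolding holds_from_generation_def T_def by (intro exI[of _ "Suc n"]) auto
qed

end
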